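(* Let $f$ be a polynomial with integer coefficients of degree $r\ge3$ with positive leading coefficient, positive and strictly increasing on $[0,\infty)$, and let $g_N(x)=f'(x)\left(1-\frac{f(x)}{f(N)}\right)\big/\int_0^N f'(t)\left(1-\frac{f(t)}{f(N)}\right)dt$. For any fixed integers $Q,k\ge2$, \[ \liminf_{N\to\infty}\inf_{u\in\mathbb{R}^2}\sum_{\substack{d\in\pm D_{Q!,k}\\ u\cdot d\in\mathfrak{M}_{N,Q}}}\sum_{j=1}^N g_N(j)\,e(u\cdot f(j)d)\ge -4. \]
   Context: $e(\alpha)=e^{2\pi i\alpha}$ and $u\cdot x$ is the dot product. For positive integers $q,k$ with $k\ge2$, let $X_{q,k}=\prod_{j=1}^{k-1}(q^{k+j}+q^{k-j}+1)$ and let $D_{q,k}\subseteq\mathbb{Z}^2$ consist of the points $\frac{X_{q,k}}{q^{k+j}+q^{k-j}+1}\left(q^{k+j}-q^{k-j},\,-q^j-2q^k\right)$ for $j=1,\ldots,k-1$; $\pm D_{q,k}=\{\pm d:d\in D_{q,k}\}$. The major arcs are $\mathfrak{M}_{N,Q}=\bigcup[\frac ab-N^{-r+\frac1r},\frac ab+N^{-r+\frac1r}]$, the union over all non-zero coprime integers $a,b$ with $2\le b\le Q$. *)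

theory Defs
  imports "HOL-Analysis.Analysis" "HOL-Computational_Algebra.Polynomial"
begin

definition e_fun :: "real \<Rightarrow> complex" where
  "e_fun \<alpha> = exp (2 * of_real pi * \<i> * of_real \<alpha>)"

definition polyR :: "int poly \<Rightarrow> real \<Rightarrow> real" where
  "polyR f x = poly (map_poly real_of_int f) x"

definition polyR' :: "int poly \<Rightarrow> real \<Rightarrow> real" where
  "polyR' f x = poly (pderiv (map_poly real_of_int f)) x"

definition gN :: "int poly \<Rightarrow> nat \<Rightarrow> real \<Rightarrow> real" where
  "gN f N x = polyR' f x * (1 - polyR f x / polyR f (real N)) /
      integral {0..real N} (\<lambda>t. polyR' f t * (1 - polyR f t / polyR f (real N)))"

definition Xqk :: "int \<Rightarrow> nat \<Rightarrow> int" where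
  "Xqk q k = (\<Prod>j\<in>{1..k-1}. q^(k+j) + q^(k-j) + 1)"

definition Dqk :: "int \<Rightarrow> nat \<Rightarrow> (int \<times> int) set" where
  "Dqk q k = (\<lambda>j. (Xqk q k div (q^(k+j) + q^(k-j) + 1) * (q^(k+j) - q^(k-j)),
                     Xqk q k div (q^(k+j) + q^(k-j) + 1) * (- (q^j) - 2 * q^k))) ` {1..k-1}"

definition pmDqk :: "int \<Rightarrow> nat \<Rightarrow> (int \<times> int) set" where
  "pmDqk q k = Dqk q k \<union> (\<lambda>(a,b). (-a,-b)) ` Dqk q k"

definition dotp :: "real \<times> real \<Rightarrow> int \<times> int \<Rightarrow> real" where
  "dotp u d = fst u * real_of_int (fst d) + snd u * real_of_int (snd d)"

text \<open>Major arcs M_{N,Q}, with r the degree of f\<close>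
definition major_arcs :: "nat \<Rightarrow> nat \<Rightarrow> nat \<Rightarrow> real set" where
  "major_arcs r N Q = (\<Union>{ {real_of_int a / real_of_int b - real N powr (- real r + 1 / real r) ..
                          real_of_int a / real_of_int b + real N powr (- real r + 1 / real r)}
        | a b. a \<noteq> 0 \<and> b \<noteq> 0 \<and> coprime a b \<and> 2 \<le> b \<and> b \<le> int Q })"

end

theory Submission
  imports Defs
begin

(*
  Write D(q,k) = {m_j v_j : 1 <= j < k} with v_j = (q^(k+j) - q^(k-j), -q^j - 2q^k) and cofactors
  m_j = X(q,k) / (q^(k+j) + q^(k-j) + 1), which are 1 mod q.  For i < j, det(v_i, v_j) is q^(k-(j-i))
  times a number that is -1 mod q.  Suppose u.d lies on a major arc for three indices i1 < i2 < i3,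
  i.e. within delta_N of fractions a/b with 2 <= b <= Q, so that b divides q = Q!.  Pairing the
  Pluecker relation det(d2,d3) d1 - det(d1,d3) d2 + det(d1,d2) d3 = 0 with u and multiplying by q
  gives an integer relation among the fractions, exact because delta_N -> 0.  Modulo
  q^(k-(i3-i1)+1) its outer terms vanish, which forces the middle denominator to divide its
  numerator, impossible for b >= 2.  So at most four d in +-D(q,k) meet the major arcs, each with
  real part at least -sum_{j<=N} g_N(j).  Finally g_N >= 0 is a probability density on [0,N], and
  two applications of the mean value theorem show that its Riemann sum is 1 + O(1/N).
*)

section \<open>The vectors of D(q,k) and their determinants\<close>

definition Dqk_den :: "int \<Rightarrow> nat \<Rightarrow> nat \<Rightarrow> int" where
  "Dqk_den q k j = q^(k+j) + q^(k-j) + 1"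

definition Dqk_dir :: "int \<Rightarrow> nat \<Rightarrow> nat \<Rightarrow> int \<times> int" where
  "Dqk_dir q k j = (q^(k+j) - q^(k-j), - (q^j) - 2 * q^k)"

definition Dqk_cofactor :: "int \<Rightarrow> nat \<Rightarrow> nat \<Rightarrow> int" where
  "Dqk_cofactor q k j = Xqk q k div Dqk_den q k j"

definition Dqk_vec :: "int \<Rightarrow> nat \<Rightarrow> nat \<Rightarrow> int \<times> int" where
  "Dqk_vec q k j =
     (Dqk_cofactor q k j * fst (Dqk_dir q k j), Dqk_cofactor q k j * snd (Dqk_dir q k j))"

lemma Dqk_eq_image: "Dqk q k = Dqk_vec q k ` {1..k-1}"
  by (simp add: Dqk_def Dqk_vec_def Dqk_cofactor_def Dqk_den_def Dqk_dir_def)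

definition det2 :: "int \<times> int \<Rightarrow> int \<times> int \<Rightarrow> int" where
  "det2 x y = fst x * snd y - snd x * fst y"

lemma det2_plucker_dotp:
  "real_of_int (det2 y z) * dotp u x - real_of_int (det2 x z) * dotp u y
     + real_of_int (det2 x y) * dotp u z = 0"
  unfolding det2_def dotp_def by (simp add: algebra_simps)

lemma coprime_mult_add_one: "coprime (q * m + 1) q"
  for q m :: "'a::{algebraic_semidom, comm_ring_1}"
  by (rule coprimeI) (metis dvd_add_right_iff dvd_mult2)

lemma det2_Dqk_dir:
  assumes "i < j" "j < k"
  obtains w where "det2 (Dqk_dir q k i) (Dqk_dir q k j) = q^(k-(j-i)) * w" "coprime w q"
proof -
  define a where "a = j - i - 1"
  define b where "b = k - j - 1"
  have k: "k = i+a+b+2" and j: "j = i+a+1"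
    using assms unfolding a_def b_def by auto
  define X where "X = q^i"
  define A where "A = q^a"
  define B where "B = q^b"
  define E where "E = 2*X*X*A*A*A*B*q*q*q - 2*X*X*A*A*B*q*q + 2*A*A*B*q*q - 2*A*B*q + A*A*q"
  have "Dqk_dir q k i = (X*X*A*B*q*q - A*B*q*q, - X - 2*(X*A*B*q*q))"
    "Dqk_dir q k j = (X*X*A*A*B*q*q*q - B*q, - (X*A*q) - 2*(X*A*B*q*q))"
    "q^(k-(j-i)) = X*B*q"
    unfolding Dqk_dir_def X_def A_def B_def k j by (simp_all add: power_add power2_eq_square)
  then have "det2 (Dqk_dir q k i) (Dqk_dir q k j) = q^(k-(j-i)) * - (q * (-E) + 1)"
    unfolding det2_def E_def by (simp add: algebra_simps)
  then show thesis
    using that coprime_mult_add_one[of q "-E"] by (metis coprime_minus_left_iff)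
qed

lemma coprime_Dqk_den:
  assumes "1 \<le> l" "l < k"
  shows "coprime (Dqk_den q k l) q"
proof -
  have "k + l = Suc (k+l-1)" "k - l = Suc (k-l-1)"
    using assms by simp_all
  then have "q^(k+l) = q * q^(k+l-1)" "q^(k-l) = q * q^(k-l-1)"
    by (metis power_Suc)+
  then have "Dqk_den q k l = q * (q^(k+l-1) + q^(k-l-1)) + 1"
    unfolding Dqk_den_def by (simp add: algebra_simps)
  then show ?thesis
    by (simp add: coprime_mult_add_one)
qed

lemma Dqk_cofactor_eq_prod:
  assumes "0 \<le> q" "j \<in> {1..k-1}"
  shows "Dqk_cofactor q k j = (\<Prod>l\<in>{1..k-1}-{j}. Dqk_den q k l)"
proof -
  have "Xqk q k = Dqk_den q k j * (\<Prod>l\<in>{1..k-1}-{j}. Dqk_den q k l)"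
    unfolding Xqk_def Dqk_den_def using assms(2) by (simp add: prod.remove)
  moreover have "Dqk_den q k j > 0"
    unfolding Dqk_den_def using assms(1) by (simp add: add_nonneg_pos)
  ultimately show ?thesis
    unfolding Dqk_cofactor_def by simp
qed

lemma coprime_Dqk_cofactor:
  assumes "0 \<le> q" "j \<in> {1..k-1}"
  shows "coprime (Dqk_cofactor q k j) q"
  unfolding Dqk_cofactor_eq_prod[OF assms]
  by (rule prod_coprime_left) (auto intro: coprime_Dqk_den)

lemma det2_Dqk_vec:
  assumes "0 \<le> q" "1 \<le> i" "i < j" "j < k"
  obtains w where "det2 (Dqk_vec q k i) (Dqk_vec q k j) = q^(k-(j-i)) * w" "coprime w q"
proof -
  obtain w where w: "det2 (Dqk_dir q k i) (Dqk_dir q k j) = q^(k-(j-i)) * w" "coprime w q"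
    using det2_Dqk_dir assms(3,4) by blast
  define m where "m l = Dqk_cofactor q k l" for l
  have "det2 (Dqk_vec q k i) (Dqk_vec q k j) = q^(k-(j-i)) * (m i * m j * w)"
    unfolding Dqk_vec_def det2_def m_def using w(1) by (simp add: det2_def algebra_simps)
  moreover have "coprime (m i * m j * w) q"
    unfolding m_def using assms w(2) by (simp add: coprime_Dqk_cofactor)
  ultimately show thesis
    using that by blast
qed

section \<open>Values near fractions with denominators dividing q\<close>

definition near_fraction :: "int \<Rightarrow> real \<Rightarrow> real \<Rightarrow> bool" where
  "near_fraction q \<delta> t \<longleftrightarrow>
     (\<exists>a b. coprime a b \<and> 2 \<le> b \<and> b dvd q \<and> \<bar>t - of_int a / of_int b\<bar> \<le> \<delta>)"

lemma near_fraction_uminus: "near_fraction q \<delta> (- t) \<longleftrightarrow> near_fraction q \<delta> t"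
proof -
  have "near_fraction q \<delta> (- t)" if near: "near_fraction q \<delta> t" for t
  proof -
    obtain a b where "coprime a b" "2 \<le> b" "b dvd q" "\<bar>t - of_int a / of_int b\<bar> \<le> \<delta>"
      using near unfolding near_fraction_def by blast
    then show ?thesis
      unfolding near_fraction_def by (intro exI[of _ "- a"] exI[of _ b]) auto
  qed
  from this[of t] this[of "- t"] show ?thesis
    by auto
qed

lemma near_fraction_choice:
  assumes "\<And>i. i \<in> I \<Longrightarrow> near_fraction q \<delta> (t i)"
  obtains a b where "\<And>i. i \<in> I \<Longrightarrow> coprime (a i) (b i) \<and> 2 \<le> b i \<and> b i dvd q \<and>
    \<bar>t i - of_int (a i) / of_int (b i)\<bar> \<le> \<delta>"
proof -
  have "\<forall>i\<in>I. \<exists>ab. coprime (fst ab) (snd ab) \<and> 2 \<le> snd ab \<and> snd ab dvd q \<and>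
      \<bar>t i - of_int (fst ab) / of_int (snd ab)\<bar> \<le> \<delta>"
    using assms unfolding near_fraction_def by fastforce
  then obtain ab where "\<forall>i\<in>I. coprime (fst (ab i)) (snd (ab i)) \<and> 2 \<le> snd (ab i) \<and>
      snd (ab i) dvd q \<and> \<bar>t i - of_int (fst (ab i)) / of_int (snd (ab i))\<bar> \<le> \<delta>"
    by (rule bchoice[THEN exE])
  then show thesis
    by (intro that[of "\<lambda>i. fst (ab i)" "\<lambda>i. snd (ab i)"]) blast
qed

definition major_arc_width :: "nat \<Rightarrow> nat \<Rightarrow> real" where
  "major_arc_width r N = real N powr (- real r + 1 / real r)"

lemma major_arcs_imp_near_fraction:
  assumes "t \<in> major_arcs r N Q"
  shows "near_fraction (int (fact Q)) (major_arc_width r N) t"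
proof -
  obtain a b where ab: "coprime a b" "2 \<le> b" "b \<le> int Q"
    "\<bar>t - of_int a / of_int b\<bar> \<le> major_arc_width r N"
    using assms unfolding major_arcs_def major_arc_width_def by (auto simp: abs_le_iff)
  have "nat b dvd fact Q"
    using ab(2,3) by (intro dvd_fact) auto
  then have "int (nat b) dvd int (fact Q)"
    by (simp only: int_dvd_int_iff)
  then have "b dvd int (fact Q)"
    using ab(2) by simp
  with ab show ?thesis
    unfolding near_fraction_def by blast
qed

lemma major_arc_width_tendsto_0:
  assumes "2 \<le> r"
  shows "(major_arc_width r \<longlongrightarrow> 0) sequentially"
  unfolding major_arc_width_def
proof (rule tendsto_neg_powr)
  have "1 / real r \<le> 1" "2 \<le> real r"
    using assms by simp_all
  then show "- real r + 1 / real r < 0"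
    by linarith
qed (rule filterlim_real_sequentially)

lemma integer_relation_of_near_fractions:
  fixes c a b :: "'i \<Rightarrow> int" and t :: "'i \<Rightarrow> real" and q :: int and K \<delta> :: real
  assumes "finite I" "0 \<le> q"
    and relation: "(\<Sum>i\<in>I. of_int (c i) * t i) = 0"
    and denom: "\<And>i. i \<in> I \<Longrightarrow> b i dvd q \<and> b i \<noteq> 0"
    and approx: "\<And>i. i \<in> I \<Longrightarrow> \<bar>t i - of_int (a i) / of_int (b i)\<bar> \<le> \<delta>"
    and bounded: "\<And>i. i \<in> I \<Longrightarrow> \<bar>of_int (c i)\<bar> \<le> K"
    and small: "real (card I) * q * K * \<delta> < 1"
  shows "(\<Sum>i\<in>I. c i * a i * (q div b i)) = 0"
proof -
  define e where "e i = of_int (a i) / of_int (b i) - t i" for i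
  have "of_int (\<Sum>i\<in>I. c i * a i * (q div b i)) = q * (\<Sum>i\<in>I. of_int (c i) * (a i / b i))"
    using denom by (simp add: sum_distrib_left real_of_int_div ac_simps)
  also have "\<dots> = q * (\<Sum>i\<in>I. of_int (c i) * e i)"
    using relation by (simp add: e_def right_diff_distrib sum_subtractf)
  finally have eq: "of_int (\<Sum>i\<in>I. c i * a i * (q div b i)) = q * (\<Sum>i\<in>I. of_int (c i) * e i)" .
  have "\<bar>\<Sum>i\<in>I. of_int (c i) * e i\<bar> \<le> (\<Sum>i\<in>I. K * \<delta>)"
  proof (rule order.trans[OF sum_abs sum_mono])
    fix i assume "i \<in> I"
    then show "\<bar>of_int (c i) * e i\<bar> \<le> K * \<delta>"
      unfolding abs_mult e_def using bounded approx
      by (intro mult_mono) (auto simp: abs_minus_commute intro: order.trans[OF abs_ge_zero])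
  qed
  then have "\<bar>of_int (\<Sum>i\<in>I. c i * a i * (q div b i)) :: real\<bar> \<le> q * (card I * K * \<delta>)"
    unfolding eq abs_mult using \<open>0 \<le> q\<close> by (simp add: mult_left_mono)
  then have "\<bar>of_int (\<Sum>i\<in>I. c i * a i * (q div b i)) :: real\<bar> < 1"
    using small by (simp add: algebra_simps)
  then show ?thesis
    by linarith
qed

lemma plucker_relation_of_near_fractions:
  fixes v :: "'i \<Rightarrow> int \<times> int" and q :: int and u :: "real \<times> real" and K \<delta> :: real
  assumes "0 \<le> q" and distinct: "i1 \<noteq> i2" "i1 \<noteq> i3" "i2 \<noteq> i3"
    and bounded: "\<And>i j. i \<in> {i1, i2, i3} \<Longrightarrow> j \<in> {i1, i2, i3} \<Longrightarrow> \<bar>of_int (det2 (v i) (v j))\<bar> \<le> K"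
    and small: "3 * q * K * \<delta> < 1"
    and near: "\<And>i. i \<in> {i1, i2, i3} \<Longrightarrow> near_fraction q \<delta> (dotp u (v i))"
  obtains a b where "\<And>i. i \<in> {i1, i2, i3} \<Longrightarrow> coprime (a i) (b i) \<and> 2 \<le> b i \<and> b i dvd q"
    "det2 (v i2) (v i3) * a i1 * (q div b i1) - det2 (v i1) (v i3) * a i2 * (q div b i2)
       + det2 (v i1) (v i2) * a i3 * (q div b i3) = 0"
proof -
  define I where "I = {i1, i2, i3}"
  obtain a b where ab: "\<And>i. i \<in> I \<Longrightarrow> coprime (a i) (b i) \<and> 2 \<le> b i \<and> b i dvd q \<and>
      \<bar>dotp u (v i) - of_int (a i) / of_int (b i)\<bar> \<le> \<delta>"
    using near_fraction_choice[of I q \<delta> "\<lambda>i. dotp u (v i)"] near unfolding I_def by blast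
  define c where "c i = (if i = i1 then det2 (v i2) (v i3)
                         else if i = i2 then - det2 (v i1) (v i3) else det2 (v i1) (v i2))" for i
  have c: "c i1 = det2 (v i2) (v i3)" "c i2 = - det2 (v i1) (v i3)" "c i3 = det2 (v i1) (v i2)"
    using distinct unfolding c_def by auto
  have "(\<Sum>i\<in>I. c i * a i * (q div b i)) = 0"
  proof (rule integer_relation_of_near_fractions[where t = "\<lambda>i. dotp u (v i)" and K = K and \<delta> = \<delta>])
    show "finite I" "0 \<le> q"
      using \<open>0 \<le> q\<close> unfolding I_def by simp_all
    show "(\<Sum>i\<in>I. of_int (c i) * dotp u (v i)) = 0"
      using det2_plucker_dotp[of "v i2" "v i3" u "v i1"] distinct
      unfolding I_def by (simp add: c algebra_simps)
    show "real (card I) * q * K * \<delta> < 1"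
      using small distinct unfolding I_def by simp
  next
    fix i assume "i \<in> I"
    then show "b i dvd q \<and> b i \<noteq> 0" "\<bar>dotp u (v i) - of_int (a i) / of_int (b i)\<bar> \<le> \<delta>"
      using ab by force+
    show "\<bar>of_int (c i)\<bar> \<le> K"
      using \<open>i \<in> I\<close> bounded unfolding I_def by (auto simp: c)
  qed
  then show thesis
    using that[of a b] ab distinct unfolding I_def by (simp add: c add.assoc)
qed

lemma is_unit_denominator_if_power_dvd:
  fixes q w a b :: int
  assumes "q ^ Suc n dvd q ^ n * w * (a * (q div b))"
    and "coprime w q" "coprime a b" "b dvd q" "q \<noteq> 0"
  shows "is_unit b"
proof -
  have "q ^ n * q dvd q ^ n * (w * (a * (q div b)))"
    using assms(1) by (simp add: ac_simps)
  then have "q dvd w * (a * (q div b))"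
    using \<open>q \<noteq> 0\<close> by simp
  then have "b * (q div b) dvd a * (q div b)"
    using assms(2,4) by (simp add: coprime_commute coprime_dvd_mult_right_iff)
  moreover have "q div b \<noteq> 0"
    using assms(4,5) by auto
  ultimately have "b dvd a"
    by simp
  then show ?thesis
    using \<open>coprime a b\<close> by (simp add: coprime_absorb_right)
qed

lemma no_three_near_fractions:
  fixes q :: int and u :: "real \<times> real" and K \<delta> :: real
  assumes "2 \<le> q"
    and bounded: "\<And>i j. i \<in> {1..k-1} \<Longrightarrow> j \<in> {1..k-1} \<Longrightarrow>
                   \<bar>of_int (det2 (Dqk_vec q k i) (Dqk_vec q k j))\<bar> \<le> K"
    and small: "3 * q * K * \<delta> < 1"
    and order: "1 \<le> i1" "i1 < i2" "i2 < i3" "i3 < k"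
    and near: "\<And>i. i \<in> {i1, i2, i3} \<Longrightarrow> near_fraction q \<delta> (dotp u (Dqk_vec q k i))"
  shows False
proof -
  define v where "v = Dqk_vec q k"
  define n where "n = k - (i3 - i1)"
  have "0 \<le> q" "1 \<le> i2" "i1 < i3" "i2 < k"
    using \<open>2 \<le> q\<close> order by auto
  have distinct: "i1 \<noteq> i2" "i1 \<noteq> i3" "i2 \<noteq> i3"
    using order by auto
  have "{i1, i2, i3} \<subseteq> {1..k-1}"
    using order by auto
  then have "\<And>i j. i \<in> {i1, i2, i3} \<Longrightarrow> j \<in> {i1, i2, i3} \<Longrightarrow> \<bar>of_int (det2 (v i) (v j))\<bar> \<le> K"
    unfolding v_def using bounded by blast
  then obtain a b where ab: "\<And>i. i \<in> {i1, i2, i3} \<Longrightarrow> coprime (a i) (b i) \<and> 2 \<le> b i \<and> b i dvd q"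
    and relation: "det2 (v i2) (v i3) * a i1 * (q div b i1)
       - det2 (v i1) (v i3) * a i2 * (q div b i2) + det2 (v i1) (v i2) * a i3 * (q div b i3) = 0"
    using plucker_relation_of_near_fractions[OF \<open>0 \<le> q\<close> distinct _ small] near
    unfolding v_def by blast
  obtain w12 where w12: "det2 (v i1) (v i2) = q^(k-(i2-i1)) * w12"
    using det2_Dqk_vec[OF \<open>0 \<le> q\<close> order(1,2) \<open>i2 < k\<close>] unfolding v_def by blast
  obtain w13 where w13: "det2 (v i1) (v i3) = q^n * w13" "coprime w13 q"
    using det2_Dqk_vec[OF \<open>0 \<le> q\<close> order(1) \<open>i1 < i3\<close> order(4)] unfolding v_def n_def by blast
  obtain w23 where w23: "det2 (v i2) (v i3) = q^(k-(i3-i2)) * w23"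
    using det2_Dqk_vec[OF \<open>0 \<le> q\<close> \<open>1 \<le> i2\<close> order(3,4)] unfolding v_def by blast
  have "q ^ Suc n dvd q ^ (k-(i3-i2))" "q ^ Suc n dvd q ^ (k-(i2-i1))"
    using order unfolding n_def by (intro le_imp_power_dvd; simp)+
  then have "q ^ Suc n dvd
      det2 (v i2) (v i3) * a i1 * (q div b i1) + det2 (v i1) (v i2) * a i3 * (q div b i3)"
    unfolding w12 w23 by (simp only: dvd_add dvd_mult2)
  also have "\<dots> = q ^ n * w13 * (a i2 * (q div b i2))"
    using relation unfolding w13(1) mult.assoc by linarith
  finally have "is_unit (b i2)"
    by (rule is_unit_denominator_if_power_dvd) (use ab[of i2] w13(2) \<open>2 \<le> q\<close> in auto)
  with ab[of i2] show False
    by simp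
qed

lemma card_le_2_if_no_increasing_triple:
  fixes J :: "'a::linorder set"
  assumes "finite J"
    and no_triple: "\<And>a b c. a \<in> J \<Longrightarrow> b \<in> J \<Longrightarrow> c \<in> J \<Longrightarrow> a < b \<Longrightarrow> b < c \<Longrightarrow> False"
  shows "card J \<le> 2"
proof (rule ccontr)
  assume "\<not> card J \<le> 2"
  then obtain S where "S \<subseteq> J" "card S = 3"
    by (metis not_le_imp_less Suc_leI numeral_2_eq_2 numeral_3_eq_3 obtain_subset_with_card_n)
  then obtain x y z where "{x, y, z} \<subseteq> J" "x \<noteq> y" "y \<noteq> z" "x \<noteq> z"
    by (auto simp: card_3_iff)
  then show False
    using no_triple by (metis insert_subset linorder_neqE)
qed

lemma card_pmDqk_near_fraction_le_4:
  fixes q :: int and u :: "real \<times> real" and K \<delta> :: real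
  assumes "2 \<le> q"
    and bounded: "\<And>i j. i \<in> {1..k-1} \<Longrightarrow> j \<in> {1..k-1} \<Longrightarrow>
                   \<bar>of_int (det2 (Dqk_vec q k i) (Dqk_vec q k j))\<bar> \<le> K"
    and small: "3 * q * K * \<delta> < 1"
  shows "card {d \<in> pmDqk q k. near_fraction q \<delta> (dotp u d)} \<le> 4"
proof -
  define J where "J = {j \<in> {1..k-1}. near_fraction q \<delta> (dotp u (Dqk_vec q k j))}"
  define neg :: "int \<times> int \<Rightarrow> int \<times> int" where "neg = (\<lambda>(a, b). (- a, - b))"
  have "finite J"
    unfolding J_def by simp
  have "card J \<le> 2"
  proof (rule card_le_2_if_no_increasing_triple[OF \<open>finite J\<close>])
    fix i1 i2 i3 assume "i1 \<in> J" "i2 \<in> J" "i3 \<in> J" and order: "i1 < i2" "i2 < i3"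
    then have "1 \<le> i1" "i3 < k" "\<And>i. i \<in> {i1, i2, i3} \<Longrightarrow> near_fraction q \<delta> (dotp u (Dqk_vec q k i))"
      unfolding J_def by auto
    then show False
      using no_three_near_fractions[OF assms] order by blast
  qed
  have dotp_neg: "dotp u (neg d) = - dotp u d" for d
    unfolding neg_def dotp_def by (cases d) simp
  have "{d \<in> pmDqk q k. near_fraction q \<delta> (dotp u d)} \<subseteq> Dqk_vec q k ` J \<union> neg ` Dqk_vec q k ` J"
  proof
    fix d assume d: "d \<in> {d \<in> pmDqk q k. near_fraction q \<delta> (dotp u d)}"
    then obtain j where "j \<in> {1..k-1}" "d = Dqk_vec q k j \<or> d = neg (Dqk_vec q k j)"
      unfolding pmDqk_def Dqk_eq_image neg_def[symmetric] by blast
    with d show "d \<in> Dqk_vec q k ` J \<union> neg ` Dqk_vec q k ` J"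
      unfolding J_def by (auto simp: dotp_neg near_fraction_uminus)
  qed
  then have "card {d \<in> pmDqk q k. near_fraction q \<delta> (dotp u d)}
      \<le> card (Dqk_vec q k ` J) + card (neg ` Dqk_vec q k ` J)"
    using \<open>finite J\<close> by (meson card_Un_le card_mono finite_Un finite_imageI order.trans)
  also have "\<dots> \<le> card J + card J"
    using \<open>finite J\<close> by (meson add_mono card_image_le finite_imageI order.trans)
  finally show ?thesis
    using \<open>card J \<le> 2\<close> by linarith
qed

section \<open>The weight g(N)\<close>

definition coeff_abs_sum :: "real poly \<Rightarrow> real" where
  "coeff_abs_sum p = (\<Sum>i\<le>degree p. \<bar>coeff p i\<bar>)"

lemma coeff_abs_sum_nonneg: "0 \<le> coeff_abs_sum p"
  unfolding coeff_abs_sum_def by (simp add: sum_nonneg)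

lemma abs_poly_le_coeff_abs_sum:
  fixes p :: "real poly"
  assumes "degree p \<le> d" "0 \<le> x" "x \<le> n" "1 \<le> n"
  shows "\<bar>poly p x\<bar> \<le> coeff_abs_sum p * n ^ d"
proof -
  have "\<bar>poly p x\<bar> \<le> (\<Sum>i\<le>degree p. \<bar>coeff p i * x ^ i\<bar>)"
    unfolding poly_altdef by (rule sum_abs)
  also have "\<dots> \<le> (\<Sum>i\<le>degree p. \<bar>coeff p i\<bar> * n ^ d)"
  proof (rule sum_mono)
    fix i assume "i \<in> {..degree p}"
    then have "x ^ i \<le> n ^ d"
      using assms by (meson atMost_iff order.trans power_increasing power_mono)
    then show "\<bar>coeff p i * x ^ i\<bar> \<le> \<bar>coeff p i\<bar> * n ^ d"
      unfolding abs_mult using assms(2) by (simp add: mult_left_mono)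
  qed
  also have "\<dots> = coeff_abs_sum p * n ^ d"
    unfolding coeff_abs_sum_def by (simp add: sum_distrib_right)
  finally show ?thesis .
qed

lemma eventually_pow_le_poly:
  fixes p :: "real poly"
  assumes "a < lead_coeff p"
  shows "eventually (\<lambda>x. a * x ^ degree p \<le> poly p x) at_top"
proof -
  have "((\<lambda>x. poly p x / x ^ degree p) \<longlongrightarrow> lead_coeff p) at_top"
    using poly_divide_tendsto_aux[of p] at_top_le_at_infinity by (rule tendsto_mono[rotated])
  then have "eventually (\<lambda>x. a < poly p x / x ^ degree p) at_top"
    using assms by (rule order_tendstoD(1))
  then show ?thesis
    using eventually_gt_at_top[of 0]
    by eventually_elim (simp add: pos_less_divide_eq less_imp_le)
qed

lemma pderiv_nonneg_if_strict_mono_on: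
  fixes p :: "real poly"
  assumes mono: "strict_mono_on {0..} (poly p)" and "0 \<le> x"
  shows "0 \<le> poly (pderiv p) x"
proof (rule ccontr)
  assume "\<not> 0 \<le> poly (pderiv p) x"
  then obtain d where "d > 0" and decreasing: "\<And>h. 0 < h \<Longrightarrow> h < d \<Longrightarrow> poly p (x + h) < poly p x"
    using DERIV_neg_dec_right[OF poly_DERIV] by (metis not_le)
  have "poly p x < poly p (x + d/2)"
    using \<open>0 \<le> x\<close> \<open>d > 0\<close> by (intro strict_mono_onD[OF mono]) auto
  with decreasing[of "d/2"] \<open>d > 0\<close> show False
    by simp
qed

lemma sum_le_primitive_plus_deriv_bound:
  fixes \<Phi> \<phi> \<phi>' :: "real \<Rightarrow> real" and N :: nat and M :: real
  assumes primitive: "\<And>x. 0 \<le> x \<Longrightarrow> x \<le> real N \<Longrightarrow> (\<Phi> has_real_derivative \<phi> x) (at x)"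
    and deriv: "\<And>x. 0 \<le> x \<Longrightarrow> x \<le> real N \<Longrightarrow> (\<phi> has_real_derivative \<phi>' x) (at x)"
    and bound: "\<And>x. 0 \<le> x \<Longrightarrow> x \<le> real N \<Longrightarrow> \<bar>\<phi>' x\<bar> \<le> M"
  shows "(\<Sum>j=1..N. \<phi> (real j)) \<le> \<Phi> (real N) - \<Phi> 0 + real N * M"
proof -
  have step: "\<phi> (real n + 1) \<le> \<Phi> (real n + 1) - \<Phi> (real n) + M" if "n < N" for n
  proof -
    have "real n + 1 \<le> N"
      using that by linarith
    obtain z where z: "real n < z" "z < real n + 1" "\<Phi> (real n + 1) - \<Phi> (real n) = \<phi> z"
      using MVT2[of "real n" "real n + 1" \<Phi> \<phi>] primitive \<open>real n + 1 \<le> N\<close> by force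
    obtain w where w: "z < w" "w < real n + 1" "\<phi> (real n + 1) - \<phi> z = (real n + 1 - z) * \<phi>' w"
      using MVT2[of z "real n + 1" \<phi> \<phi>'] deriv z \<open>real n + 1 \<le> N\<close> by force
    have "\<bar>\<phi>' w\<bar> \<le> M"
      using bound z w \<open>real n + 1 \<le> N\<close> by simp
    then have "(real n + 1 - z) * \<phi>' w \<le> (real n + 1 - z) * M"
      using z by (intro mult_left_mono) auto
    also have "\<dots> \<le> M"
      using z \<open>\<bar>\<phi>' w\<bar> \<le> M\<close> by (intro mult_left_le_one_le) auto
    finally show ?thesis
      using z(3) w(3) by linarith
  qed
  have "(\<Sum>j=1..n. \<phi> (real j)) \<le> \<Phi> (real n) - \<Phi> 0 + real n * M" if "n \<le> N" for n
    using that
  proof (induction n)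
    case (Suc n)
    then show ?case
      using step[of n] by (simp add: algebra_simps)
  qed simp
  then show ?thesis
    by simp
qed

definition weight :: "real poly \<Rightarrow> real \<Rightarrow> real \<Rightarrow> real" where
  "weight p c t = poly (pderiv p) t * (1 - poly p t / c)"

lemma has_real_derivative_weight_primitive:
  fixes p :: "real poly"
  assumes "c \<noteq> 0"
  shows "((\<lambda>t. poly p t - (poly p t)\<^sup>2 / (2 * c)) has_real_derivative weight p c t) (at t)"
proof -
  have "((\<lambda>t. poly p t - (poly p t)\<^sup>2 / (2 * c)) has_real_derivative
      poly (pderiv p) t - 2 * (poly (pderiv p) t * poly p t) / (2 * c)) (at t)"
    using assms by (auto intro!: derivative_eq_intros poly_DERIV)
  then show ?thesis
    unfolding weight_def using assms by (simp add: field_simps)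
qed

lemma has_real_derivative_weight:
  fixes p :: "real poly"
  assumes "c \<noteq> 0"
  shows "(weight p c has_real_derivative
      poly (pderiv (pderiv p)) t * (1 - poly p t / c) - (poly (pderiv p) t)\<^sup>2 / c) (at t)"
proof -
  have "(weight p c has_real_derivative
      poly (pderiv (pderiv p)) t * (1 - poly p t / c)
        + poly (pderiv p) t * (- (poly (pderiv p) t / c))) (at t)"
    unfolding weight_def using assms by (auto intro!: derivative_eq_intros poly_DERIV)
  then show ?thesis
    by (simp add: power2_eq_square)
qed

lemma integral_weight:
  fixes p :: "real poly"
  assumes "0 \<le> a" "c = poly p a" "c \<noteq> 0"
  shows "integral {0..a} (weight p c) = (c - poly p 0)\<^sup>2 / (2 * c)"
proof -
  have "(weight p c has_integral
      (poly p a - (poly p a)\<^sup>2 / (2 * c)) - (poly p 0 - (poly p 0)\<^sup>2 / (2 * c))) {0..a}"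
    using has_real_derivative_weight_primitive[OF assms(3)] assms(1)
    by (intro fundamental_theorem_of_calculus)
       (auto simp: has_real_derivative_iff_has_vector_derivative[symmetric]
         intro: has_field_derivative_at_within)
  then show ?thesis
    using assms(2,3) by (simp add: integral_unique field_simps power2_eq_square)
qed

lemma poly_ratio_bounds:
  fixes p :: "real poly"
  assumes mono: "strict_mono_on {0..} (poly p)" and pos: "\<And>x. 0 \<le> x \<Longrightarrow> 0 < poly p x"
    and "0 \<le> x" "x \<le> n"
  shows "0 \<le> 1 - poly p x / poly p n" "1 - poly p x / poly p n \<le> 1"
proof -
  have "poly p x \<le> poly p n"
    using assms(3,4) strict_mono_onD[OF mono, of x n] by (cases "x = n") auto
  moreover have "0 < poly p x" "0 < poly p n"
    using pos assms(3,4) by auto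
  ultimately show "0 \<le> 1 - poly p x / poly p n" "1 - poly p x / poly p n \<le> 1"
    by auto
qed

definition weight_deriv_const :: "real poly \<Rightarrow> real" where
  "weight_deriv_const p = coeff_abs_sum (pderiv (pderiv p)) + 2 * (coeff_abs_sum (pderiv p))\<^sup>2"

lemma weight_deriv_const_nonneg: "0 \<le> weight_deriv_const p"
  unfolding weight_deriv_const_def by (simp add: coeff_abs_sum_nonneg)

lemma abs_weight_deriv_le:
  fixes p :: "real poly" and n x :: real
  defines "c \<equiv> poly p n"
  assumes "2 \<le> degree p" and mono: "strict_mono_on {0..} (poly p)"
    and pos: "\<And>x. 0 \<le> x \<Longrightarrow> 0 < poly p x"
    and "1 \<le> n" "n ^ degree p \<le> 2 * c" "0 \<le> x" "x \<le> n"
  shows "\<bar>poly (pderiv (pderiv p)) x * (1 - poly p x / c) - (poly (pderiv p) x)\<^sup>2 / c\<bar>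
    \<le> weight_deriv_const p * n ^ (degree p - 2)"
proof -
  define r where "r = degree p"
  define B1 where "B1 = coeff_abs_sum (pderiv p)"
  define B2 where "B2 = coeff_abs_sum (pderiv (pderiv p))"
  have "0 < c"
    unfolding c_def using pos \<open>1 \<le> n\<close> by simp
  have "(r - 1) * 2 = r + (r - 2)"
    using \<open>2 \<le> degree p\<close> unfolding r_def by arith
  then have pow: "(n ^ (r - 1))\<^sup>2 = n ^ r * n ^ (r - 2)"
    by (metis power_add power_mult)
  have bound2: "\<bar>poly (pderiv (pderiv p)) x\<bar> \<le> B2 * n ^ (r - 2)"
    unfolding B2_def r_def using assms
    by (intro abs_poly_le_coeff_abs_sum) (auto simp: degree_pderiv)
  have "\<bar>1 - poly p x / c\<bar> \<le> 1"
    unfolding c_def using poly_ratio_bounds[OF mono pos] assms(7,8) by auto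
  then have "\<bar>poly (pderiv (pderiv p)) x\<bar> * \<bar>1 - poly p x / c\<bar> \<le> B2 * n ^ (r - 2) * 1"
    by (rule mult_mono[OF bound2 _ order.trans[OF abs_ge_zero bound2] abs_ge_zero])
  then have second: "\<bar>poly (pderiv (pderiv p)) x * (1 - poly p x / c)\<bar> \<le> B2 * n ^ (r - 2)"
    by (simp add: abs_mult)
  have "\<bar>poly (pderiv p) x\<bar> \<le> B1 * n ^ (r - 1)"
    unfolding B1_def r_def using assms
    by (intro abs_poly_le_coeff_abs_sum) (auto simp: degree_pderiv)
  then have "\<bar>poly (pderiv p) x\<bar>\<^sup>2 \<le> (B1 * n ^ (r - 1))\<^sup>2"
    by (rule power_mono) simp
  then have "(poly (pderiv p) x)\<^sup>2 \<le> B1\<^sup>2 * (n ^ (r - 1))\<^sup>2"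
    by (simp add: power_mult_distrib)
  also have "\<dots> \<le> B1\<^sup>2 * (2 * c * n ^ (r - 2))"
    unfolding pow using assms(6) \<open>1 \<le> n\<close> unfolding r_def
    by (intro mult_left_mono mult_right_mono) auto
  finally have first: "(poly (pderiv p) x)\<^sup>2 / c \<le> 2 * B1\<^sup>2 * n ^ (r - 2)"
    using \<open>0 < c\<close> by (simp add: divide_simps mult_ac)
  show ?thesis
    using abs_triangle_ineq4[of "poly (pderiv (pderiv p)) x * (1 - poly p x / c)"
        "(poly (pderiv p) x)\<^sup>2 / c"] second first \<open>0 < c\<close>
    unfolding weight_deriv_const_def B1_def B2_def r_def by (simp add: algebra_simps)
qed

lemma sum_weight_le_integral_plus:
  fixes p :: "real poly" and N :: nat
  defines "c \<equiv> poly p (real N)"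
  assumes "2 \<le> degree p" and mono: "strict_mono_on {0..} (poly p)"
    and pos: "\<And>x. 0 \<le> x \<Longrightarrow> 0 < poly p x"
    and "1 \<le> N" "real N ^ degree p \<le> 2 * c"
  shows "(\<Sum>j=1..N. weight p c (real j))
    \<le> (c - poly p 0)\<^sup>2 / (2 * c) + weight_deriv_const p * real N ^ (degree p - 1)"
proof -
  have "0 < c"
    unfolding c_def using pos by simp
  have "(\<Sum>j=1..N. weight p c (real j))
      \<le> (poly p (real N) - (poly p (real N))\<^sup>2 / (2 * c)) - (poly p 0 - (poly p 0)\<^sup>2 / (2 * c))
        + real N * (weight_deriv_const p * real N ^ (degree p - 2))"
  proof (rule sum_le_primitive_plus_deriv_bound)
    fix x assume x: "0 \<le> x" "x \<le> real N"
    show "((\<lambda>t. poly p t - (poly p t)\<^sup>2 / (2 * c)) has_real_derivative weight p c x) (at x)"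
      using \<open>0 < c\<close> by (intro has_real_derivative_weight_primitive) simp
    show "(weight p c has_real_derivative
        poly (pderiv (pderiv p)) x * (1 - poly p x / c) - (poly (pderiv p) x)\<^sup>2 / c) (at x)"
      using \<open>0 < c\<close> by (intro has_real_derivative_weight) simp
    show "\<bar>poly (pderiv (pderiv p)) x * (1 - poly p x / c) - (poly (pderiv p) x)\<^sup>2 / c\<bar>
        \<le> weight_deriv_const p * real N ^ (degree p - 2)"
      unfolding c_def using assms x by (intro abs_weight_deriv_le) (auto simp: c_def)
  qed
  also have "\<dots> = (c - poly p 0)\<^sup>2 / (2 * c)
      + weight_deriv_const p * (real N * real N ^ (degree p - 2))"
    using \<open>0 < c\<close> unfolding c_def[symmetric] by (simp add: field_simps power2_eq_square)
  also have "real N * real N ^ (degree p - 2) = real N ^ (degree p - 1)"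
    using \<open>2 \<le> degree p\<close> by (simp flip: power_Suc add: Suc_diff_Suc numeral_2_eq_2)
  finally show ?thesis .
qed

lemma sum_weight_le:
  fixes p :: "real poly" and N :: nat
  defines "c \<equiv> poly p (real N)"
  assumes "2 \<le> degree p" and mono: "strict_mono_on {0..} (poly p)"
    and pos: "\<And>x. 0 \<le> x \<Longrightarrow> 0 < poly p x"
    and "1 \<le> N" and growth: "real N ^ degree p \<le> 2 * c" and start: "2 * poly p 0 \<le> c"
  shows "(\<Sum>j=1..N. weight p c (real j))
    \<le> (c - poly p 0)\<^sup>2 / (2 * c) * (1 + 16 * weight_deriv_const p / real N)"
proof -
  define I where "I = (c - poly p 0)\<^sup>2 / (2 * c)"
  have "0 < c"
    unfolding c_def using pos by simp
  have "c / 2 \<le> c - poly p 0"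
    using start by simp
  then have "(c / 2)\<^sup>2 / (2 * c) \<le> I"
    unfolding I_def using \<open>0 < c\<close> by (intro divide_right_mono power_mono) auto
  then have "c \<le> 8 * I"
    using \<open>0 < c\<close> by (simp add: field_simps power2_eq_square)
  have "real N ^ (degree p - 1) * real N = real N ^ degree p"
    using \<open>2 \<le> degree p\<close> by (simp flip: power_Suc2)
  then have "real N ^ (degree p - 1) \<le> 16 * I / real N"
    using growth \<open>c \<le> 8 * I\<close> \<open>1 \<le> N\<close> by (simp add: pos_le_divide_eq)
  have "(\<Sum>j=1..N. weight p c (real j)) \<le> I + weight_deriv_const p * real N ^ (degree p - 1)"
    using sum_weight_le_integral_plus[OF \<open>2 \<le> degree p\<close> mono pos \<open>1 \<le> N\<close> growth[unfolded c_def]]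
    unfolding I_def c_def .
  also have "\<dots> \<le> I + weight_deriv_const p * (16 * I / real N)"
    using \<open>real N ^ (degree p - 1) \<le> 16 * I / real N\<close>
    by (intro add_left_mono mult_left_mono weight_deriv_const_nonneg)
  also have "\<dots> = I * (1 + 16 * weight_deriv_const p / real N)"
    by (simp add: algebra_simps)
  finally show ?thesis
    unfolding I_def .
qed

lemma polyR_eq_poly: "polyR f = poly (map_poly real_of_int f)"
  unfolding polyR_def by (rule ext) simp

lemma gN_eq_weight:
  "gN f N x = weight (map_poly real_of_int f) (polyR f N) x
      / integral {0..real N} (weight (map_poly real_of_int f) (polyR f N))"
  by (simp add: gN_def weight_def[abs_def] polyR_def polyR'_def)

lemma gN_nonneg:
  assumes mono: "strict_mono_on {0..} (polyR f)" and pos: "\<forall>x\<ge>0. polyR f x > 0"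
    and "0 \<le> x" "x \<le> real N"
  shows "0 \<le> gN f N x"
proof -
  define p where "p = map_poly real_of_int f"
  note mono_p = mono[unfolded polyR_eq_poly p_def[symmetric]]
    and pos_p = pos[unfolded polyR_eq_poly p_def[symmetric]]
  have "0 \<le> weight p (poly p N) x"
    unfolding weight_def using assms mono_p pos_p
    by (intro mult_nonneg_nonneg pderiv_nonneg_if_strict_mono_on poly_ratio_bounds) auto
  moreover have "0 < poly p N"
    using pos_p by simp
  then have "integral {0..real N} (weight p (poly p N)) = (poly p N - poly p 0)\<^sup>2 / (2 * poly p N)"
    by (intro integral_weight) auto
  with \<open>0 < poly p N\<close> have "0 \<le> integral {0..real N} (weight p (poly p N))"
    by simp
  ultimately show ?thesis
    unfolding gN_eq_weight polyR_eq_poly p_def[symmetric] by (rule divide_nonneg_nonneg)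
qed

lemma eventually_poly_growth:
  fixes p :: "real poly"
  assumes "1 \<le> degree p" "1 / 2 < lead_coeff p"
  shows "eventually (\<lambda>N. real N ^ degree p \<le> 2 * poly p (real N) \<and> 2 * poly p 0 \<le> poly p (real N))
    sequentially"
proof -
  have "eventually (\<lambda>x. 1 / 2 * x ^ degree p \<le> poly p x) at_top"
    using assms(2) by (rule eventually_pow_le_poly)
  then have "eventually (\<lambda>N. 1 / 2 * real N ^ degree p \<le> poly p (real N)) sequentially"
    using filterlim_real_sequentially by (rule eventually_compose_filterlim)
  moreover have "eventually (\<lambda>N. max 1 (4 * poly p 0) \<le> real N) sequentially"
    using filterlim_real_sequentially eventually_ge_at_top
    by (rule eventually_compose_filterlim[rotated])
  ultimately show ?thesis
  proof eventually_elim
    case (elim N)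
    have "real N \<le> real N ^ degree p"
      using elim \<open>1 \<le> degree p\<close> by (intro self_le_power) auto
    with elim show ?case
      by linarith
  qed
qed

lemma eventually_sum_gN_le:
  assumes "2 \<le> degree f" "lead_coeff f > 0"
    and mono: "strict_mono_on {0..} (polyR f)" and pos: "\<forall>x\<ge>0. polyR f x > 0"
  obtains C where "eventually (\<lambda>N. (\<Sum>j=1..N. gN f N (real j)) \<le> 1 + C / real N) sequentially"
proof -
  define p where "p = map_poly real_of_int f"
  define C where "C = 16 * weight_deriv_const p"
  note mono_p = mono[unfolded polyR_eq_poly p_def[symmetric]]
    and pos_p = pos[unfolded polyR_eq_poly p_def[symmetric]]
  have deg: "degree p = degree f"
    unfolding p_def by (simp add: degree_map_poly)
  have "1 / 2 < lead_coeff p"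
    using \<open>lead_coeff f > 0\<close> unfolding p_def by (simp add: deg[unfolded p_def] coeff_map_poly)
  then have "eventually (\<lambda>N. real N ^ degree p \<le> 2 * poly p (real N)
      \<and> 2 * poly p 0 \<le> poly p (real N)) sequentially"
    using \<open>2 \<le> degree f\<close> deg by (intro eventually_poly_growth) auto
  with eventually_ge_at_top[of 1]
  have "eventually (\<lambda>N. (\<Sum>j=1..N. gN f N (real j)) \<le> 1 + C / real N) sequentially"
  proof eventually_elim
    case (elim N)
    define c where "c = poly p (real N)"
    have "(\<Sum>j=1..N. weight p c (real j)) \<le> (c - poly p 0)\<^sup>2 / (2 * c) * (1 + C / real N)"
      unfolding c_def C_def using elim \<open>2 \<le> degree f\<close> deg mono_p pos_p by (intro sum_weight_le) auto
    moreover have "poly p 0 < c" "0 < c"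
      using elim strict_mono_onD[OF mono_p, of 0 "real N"] pos_p unfolding c_def by auto
    then have "integral {0..real N} (weight p c) = (c - poly p 0)\<^sup>2 / (2 * c)"
      and "0 < (c - poly p 0)\<^sup>2 / (2 * c)"
      using integral_weight[of "real N" c p] unfolding c_def by simp_all
    ultimately have "(\<Sum>j=1..N. weight p c (real j)) / integral {0..real N} (weight p c)
        \<le> 1 + C / real N"
      by (simp only: pos_divide_le_eq mult.commute)
    then show ?case
      unfolding gN_eq_weight polyR_eq_poly p_def[symmetric] c_def[symmetric]
      by (simp add: sum_divide_distrib)
  qed
  then show thesis
    by (rule that)
qed

section \<open>Lower bound for the major arc contribution\<close>

lemma Re_of_real_mult_e_fun_ge:
  assumes "0 \<le> g"
  shows "- g \<le> Re (complex_of_real g * e_fun x)"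
proof -
  have "Re (e_fun x) = cos (2 * pi * x)"
    unfolding e_fun_def by (simp add: Re_exp)
  then have "Re (complex_of_real g * e_fun x) = g * cos (2 * pi * x)"
    by simp
  moreover have "g * - 1 \<le> g * cos (2 * pi * x)"
    using assms by (intro mult_left_mono) auto
  ultimately show ?thesis
    by linarith
qed

lemma Re_sum_e_fun_ge:
  fixes g :: "'j \<Rightarrow> real" and h :: "'j \<Rightarrow> 'd \<Rightarrow> real" and m :: real
  assumes "card A \<le> m" and nonneg: "\<And>j. j \<in> J \<Longrightarrow> 0 \<le> g j"
  shows "- (m * (\<Sum>j\<in>J. g j)) \<le> Re (\<Sum>d\<in>A. \<Sum>j\<in>J. complex_of_real (g j) * e_fun (h j d))"
proof -
  have "0 \<le> (\<Sum>j\<in>J. g j)"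
    using nonneg by (rule sum_nonneg)
  then have "- (m * (\<Sum>j\<in>J. g j)) \<le> (\<Sum>d\<in>A. \<Sum>j\<in>J. - g j)"
    using assms(1) by (simp add: sum_negf mult_right_mono)
  also have "\<dots> \<le> (\<Sum>d\<in>A. \<Sum>j\<in>J. Re (complex_of_real (g j) * e_fun (h j d)))"
    using nonneg by (intro sum_mono Re_of_real_mult_e_fun_ge)
  finally show ?thesis
    by simp
qed

definition major_arc_sum :: "int poly \<Rightarrow> nat \<Rightarrow> nat \<Rightarrow> nat \<Rightarrow> real \<times> real \<Rightarrow> complex" where
  "major_arc_sum f Q k N u =
     (\<Sum>d \<in> {d \<in> pmDqk (int (fact Q)) k. dotp u d \<in> major_arcs (degree f) N Q}.
        \<Sum>j = 1..N. complex_of_real (gN f N (real j)) * e_fun (polyR f (real j) * dotp u d))"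

lemma Re_major_arc_sum_ge:
  fixes f :: "int poly" and u :: "real \<times> real" and K :: real
  assumes "2 \<le> Q"
    and mono: "strict_mono_on {0..} (polyR f)" and pos: "\<forall>x\<ge>0. polyR f x > 0"
    and bounded: "\<And>i j. i \<in> {1..k-1} \<Longrightarrow> j \<in> {1..k-1} \<Longrightarrow>
          \<bar>of_int (det2 (Dqk_vec (int (fact Q)) k i) (Dqk_vec (int (fact Q)) k j))\<bar> \<le> K"
    and small: "3 * real (fact Q) * K * major_arc_width (degree f) N < 1"
  shows "- (4 * (\<Sum>j=1..N. gN f N (real j))) \<le> Re (major_arc_sum f Q k N u)"
  unfolding major_arc_sum_def
proof (rule Re_sum_e_fun_ge)
  define q where "q = int (fact Q)"
  have "2 \<le> q"
    unfolding q_def using \<open>2 \<le> Q\<close> fact_ge_self[of Q] by linarith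
  have "{d \<in> pmDqk q k. dotp u d \<in> major_arcs (degree f) N Q}
      \<subseteq> {d \<in> pmDqk q k. near_fraction q (major_arc_width (degree f) N) (dotp u d)}"
    unfolding q_def using major_arcs_imp_near_fraction by blast
  moreover have "finite (pmDqk q k)"
    by (simp add: pmDqk_def Dqk_eq_image)
  ultimately have "card {d \<in> pmDqk q k. dotp u d \<in> major_arcs (degree f) N Q}
      \<le> card {d \<in> pmDqk q k. near_fraction q (major_arc_width (degree f) N) (dotp u d)}"
    by (intro card_mono) auto
  also have "\<dots> \<le> 4"
    using \<open>2 \<le> q\<close> bounded small unfolding q_def
    by (intro card_pmDqk_near_fraction_le_4) auto
  finally show "real (card {d \<in> pmDqk (int (fact Q)) k. dotp u d \<in> major_arcs (degree f) N Q}) \<le> 4"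
    unfolding q_def by simp
next
  fix j assume "j \<in> {1..N}"
  then show "0 \<le> gN f N (real j)"
    using mono pos by (intro gN_nonneg) auto
qed

lemma eventually_INF_major_arc_sum_ge:
  fixes f :: "int poly"
  assumes "2 \<le> degree f" "lead_coeff f > 0"
    and mono: "strict_mono_on {0..} (polyR f)" and pos: "\<forall>x\<ge>0. polyR f x > 0"
    and "2 \<le> Q"
  obtains C where "eventually (\<lambda>N. ereal (- 4 * (1 + C / real N))
    \<le> (INF u. ereal (Re (major_arc_sum f Q k N u)))) sequentially"
proof -
  have "bdd_above ((\<lambda>(i, j). \<bar>of_int (det2 (Dqk_vec (int (fact Q)) k i) (Dqk_vec (int (fact Q)) k j))\<bar>)
      ` ({1..k-1} \<times> {1..k-1}) :: real set)"
    by (intro bdd_above_finite) auto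
  then obtain K :: real where K: "\<And>i j. i \<in> {1..k-1} \<Longrightarrow> j \<in> {1..k-1} \<Longrightarrow>
      \<bar>of_int (det2 (Dqk_vec (int (fact Q)) k i) (Dqk_vec (int (fact Q)) k j))\<bar> \<le> K"
    unfolding bdd_above_def by fastforce
  obtain C where C: "eventually (\<lambda>N. (\<Sum>j=1..N. gN f N (real j)) \<le> 1 + C / real N) sequentially"
    using eventually_sum_gN_le assms(1-4) by blast
  have "((\<lambda>N. 3 * real (fact Q) * K * major_arc_width (degree f) N) \<longlongrightarrow> 0) sequentially"
    using \<open>2 \<le> degree f\<close> by (intro tendsto_mult_right_zero major_arc_width_tendsto_0)
  then have "eventually (\<lambda>N. 3 * real (fact Q) * K * major_arc_width (degree f) N < 1) sequentially"
    by (rule order_tendstoD(2)) simp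
  with C have "eventually (\<lambda>N. ereal (- 4 * (1 + C / real N))
      \<le> (INF u. ereal (Re (major_arc_sum f Q k N u)))) sequentially"
  proof eventually_elim
    case (elim N)
    have "- 4 * (1 + C / real N) \<le> Re (major_arc_sum f Q k N u)" for u
      using Re_major_arc_sum_ge[where u = u and K = K, OF \<open>2 \<le> Q\<close> mono pos _ elim(2)] K elim(1)
      by fastforce
    then show ?case
      by (simp add: INF_greatest)
  qed
  then show thesis
    by (rule that)
qed

theorem lemma11:
  fixes f :: "int poly" and Q k :: nat
  assumes "degree f \<ge> 3"
    and "lead_coeff f > 0"
    and "\<forall>x\<ge>0. polyR f x > 0"
    and "strict_mono_on {0..} (polyR f)"
    and "Q \<ge> 2" and "k \<ge> 2"
  shows "Liminf sequentially (\<lambda>N::nat. INF u :: real \<times> real.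
           ereal (Re (\<Sum>d \<in> {d \<in> pmDqk (int (fact Q)) k. dotp u d \<in> major_arcs (degree f) N Q}.
              \<Sum>j = 1..N. complex_of_real (gN f N (real j)) * e_fun (polyR f (real j) * dotp u d))))
         \<ge> - 4"
proof -
  have "2 \<le> degree f"
    using assms(1) by simp
  then obtain C where "eventually (\<lambda>N. ereal (- 4 * (1 + C / real N))
      \<le> (INF u. ereal (Re (major_arc_sum f Q k N u)))) sequentially"
    using eventually_INF_major_arc_sum_ge assms(2-5) by blast
  then have "Liminf sequentially (\<lambda>N. ereal (- 4 * (1 + C / real N)))
      \<le> Liminf sequentially (\<lambda>N. INF u. ereal (Re (major_arc_sum f Q k N u)))"
    by (rule Liminf_mono)
  moreover have "((\<lambda>N. - 4 * (1 + C / real N)) \<longlongrightarrow> - 4 * (1 + 0)) sequentially"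
    by (intro tendsto_intros)
  then have "Liminf sequentially (\<lambda>N. ereal (- 4 * (1 + C / real N))) = - 4"
    by (intro lim_imp_Liminf) auto
  ultimately show ?thesis
    unfolding major_arc_sum_def by simp
qed

end
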